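(* For every $n\ge -1$, the join product $\ast\colon \mathrm{N}(\triangle_+^n)^{\otimes 2}\to\mathrm{N}(\triangle_+^n)$ is a chain map, natural in $[n]$, and it makes $\mathrm{N}(\triangle_+^n)$ a Poincaré duality algebra of formal dimension $n+1$ whose unit is the empty simplex $[-1]\to[n]$.
   Context: Coefficients are in $\mathbb{Z}$. $\mathrm{N}(\triangle_+^n)$ is the right suspension of the normalized chain complex of the standard augmented $n$-simplex: it is the free abelian group with basis the subsets $\{v_0<\dots<v_{k-1}\}\subseteq\{0,\dots,n\}$, $0\le k\le n+1$, written $[v_0,\dots,v_{k-1}]$ and placed in degree $k$ (the empty simplex $\emptyset$ in degree $0$), with the convention $[v_{\pi(0)},\dots,v_{\pi(k-1)}]=(-1)^{\mathrm{sgn}\,\pi}[v_0,\dots,v_{k-1}]$, and differential $\partial[v_0,\dots,v_{k-1}]=\sum_i(-1)^i[v_0,\dots,\widehat{v_i},\dots,v_{k-1}]$ (so $\partial[v]=\emptyset$). The join product sends $[v_0,\dots,v_{p-1}]\otimes[v_p,\dots,v_{m-1}]$ to $[v_0,\dots,v_{m-1}]$ (i.e. $(-1)^{\mathrm{sgn}\,\pi}$ times the ordered generator, $\pi$ the ordering permutation) if all $v_i$ are distinct, and to $0$ otherwise. A Poincaré duality algebra of formal dimension $d$ is a connected graded-commutative algebra $A$, finitely generated in each degree, such that $A_i=0$ for $i>d$, $A_d$ has rank $1$, and the multiplication pairing $A_i\otimes A_{d-i}\to A_d$ is non-degenerate for all $i$. *)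

theory Defs
  imports Main "HOL-Library.Function_Algebras"
begin

text \<open>Chains of N(triangle_+^n), with n+1 = N vertices {0,...,N-1}.  A chain is a
  function from finite subsets of the vertex set to integer coefficients; the
  subset S (listed increasingly) is the basis element [v_0,...,v_{k-1}] of degree card S.
  The empty set is the empty simplex (degree 0).\<close>

type_synonym chain = "nat set \<Rightarrow> int"

definition smul :: "int \<Rightarrow> chain \<Rightarrow> chain" where
  "smul k c = (\<lambda>U. k * c U)"

definition basis :: "nat set \<Rightarrow> chain" where
  "basis S = (\<lambda>U. if U = S then 1 else 0)"

definition nchains :: "nat \<Rightarrow> chain set" where
  "nchains N = {c. \<forall>S. c S \<noteq> 0 \<longrightarrow> S \<subseteq> {..<N}}"

definition hom :: "nat \<Rightarrow> nat \<Rightarrow> chain set" where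
  "hom N k = {c \<in> nchains N. \<forall>S. c S \<noteq> 0 \<longrightarrow> card S = k}"

text \<open>Number of inversions of a list; (-1)^inversions xs is the sign of the
  permutation ordering xs.\<close>
definition inversions :: "nat list \<Rightarrow> nat" where
  "inversions xs = card {(i, j). i < j \<and> j < length xs \<and> xs ! j < xs ! i}"

definition simplex :: "nat list \<Rightarrow> chain" where
  "simplex xs = (if distinct xs then smul ((-1) ^ inversions xs) (basis (set xs)) else 0)"

definition join_basis :: "nat set \<Rightarrow> nat set \<Rightarrow> chain" where
  "join_basis S T = (if S \<inter> T = {} then simplex (sorted_list_of_set S @ sorted_list_of_set T) else 0)"

definition join :: "nat \<Rightarrow> chain \<Rightarrow> chain \<Rightarrow> chain" where
  "join N a b = (\<Sum>S\<in>Pow {..<N}. \<Sum>T\<in>Pow {..<N}. smul (a S * b T) (join_basis S T))"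

text \<open>Differential: d[v_0,...,v_{k-1}] = sum_i (-1)^i [v_0,..,^v_i,..,v_{k-1}], so d[v] = empty.\<close>
definition bdry_basis :: "nat set \<Rightarrow> chain" where
  "bdry_basis S = (\<Sum>i<card S. smul ((-1) ^ i) (basis (S - {sorted_list_of_set S ! i})))"

definition bdry :: "nat \<Rightarrow> chain \<Rightarrow> chain" where
  "bdry N c = (\<Sum>S\<in>Pow {..<N}. smul (c S) (bdry_basis S))"

text \<open>Morphisms [m] -> [n] of the augmented simplex category (M = m+1, N = n+1 vertices),
  and the induced map on normalized nchains (degenerate simplices go to 0).\<close>
definition simplex_map :: "nat \<Rightarrow> nat \<Rightarrow> (nat \<Rightarrow> nat) \<Rightarrow> bool" where
  "simplex_map M N f \<longleftrightarrow> (\<forall>i<M. f i < N) \<and> (\<forall>i j. i \<le> j \<longrightarrow> j < M \<longrightarrow> f i \<le> f j)"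

definition Nmap :: "nat \<Rightarrow> (nat \<Rightarrow> nat) \<Rightarrow> chain \<Rightarrow> chain" where
  "Nmap M f c = (\<Sum>S\<in>Pow {..<M}. smul (c S) (if inj_on f S then simplex (map f (sorted_list_of_set S)) else 0))"

definition span_Z :: "chain set \<Rightarrow> chain set" where
  "span_Z G = {x. \<exists>F c. finite F \<and> F \<subseteq> G \<and> x = (\<Sum>g\<in>F. smul (c g) g)}"

text \<open>Non-degeneracy over Z is read as: the adjoint A_i -> Hom(A_{d-i}, A_d) is bijective.\<close>
definition poincare_duality_algebra ::
  "chain set \<Rightarrow> (nat \<Rightarrow> chain set) \<Rightarrow> (chain \<Rightarrow> chain \<Rightarrow> chain) \<Rightarrow> chain \<Rightarrow> nat \<Rightarrow> bool" where
  "poincare_duality_algebra A Ak mult one d \<longleftrightarrow>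
     \<comment> \<open>graded abelian group\<close>
     (\<forall>k. Ak k \<subseteq> A \<and> 0 \<in> Ak k \<and> (\<forall>x\<in>Ak k. \<forall>y\<in>Ak k. x + y \<in> Ak k \<and> - x \<in> Ak k)) \<and>
     (\<forall>x\<in>A. \<exists>!xs. (\<forall>k. xs k \<in> Ak k) \<and> (\<forall>k>d. xs k = 0) \<and> x = (\<Sum>k\<le>d. xs k)) \<and>
     \<comment> \<open>unital associative Z-algebra\<close>
     (\<forall>x\<in>A. \<forall>y\<in>A. mult x y \<in> A) \<and>
     (\<forall>x\<in>A. \<forall>y\<in>A. \<forall>z\<in>A. mult (mult x y) z = mult x (mult y z)) \<and>
     (\<forall>x\<in>A. \<forall>y\<in>A. \<forall>z\<in>A. mult (x + y) z = mult x z + mult y z \<and> mult x (y + z) = mult x y + mult x z) \<and>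
     one \<in> A \<and> (\<forall>x\<in>A. mult one x = x \<and> mult x one = x) \<and>
     \<comment> \<open>graded and graded-commutative\<close>
     (\<forall>i j. \<forall>x\<in>Ak i. \<forall>y\<in>Ak j. mult x y \<in> Ak (i + j)) \<and>
     (\<forall>i j. \<forall>x\<in>Ak i. \<forall>y\<in>Ak j. mult x y = smul ((-1) ^ (i * j)) (mult y x)) \<and>
     \<comment> \<open>connected\<close>
     one \<noteq> 0 \<and> Ak 0 = range (\<lambda>k. smul k one) \<and>
     \<comment> \<open>finitely generated in each degree\<close>
     (\<forall>k. \<exists>G. finite G \<and> Ak k = span_Z G) \<and>
     \<comment> \<open>vanishing above d, rank one in degree d\<close>
     (\<forall>k>d. Ak k = {0}) \<and>
     (\<exists>g. g \<noteq> 0 \<and> Ak d = range (\<lambda>k. smul k g)) \<and>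
     \<comment> \<open>non-degenerate (perfect) pairing A_i x A_{d-i} -> A_d\<close>
     (\<forall>i\<le>d. \<forall>\<phi>. (\<forall>b\<in>Ak (d - i). \<phi> b \<in> Ak d) \<and>
                   (\<forall>b\<in>Ak (d - i). \<forall>b'\<in>Ak (d - i). \<phi> (b + b') = \<phi> b + \<phi> b')
               \<longrightarrow> (\<exists>!a. a \<in> Ak i \<and> (\<forall>b\<in>Ak (d - i). \<phi> b = mult a b)))"

end

(* Everything in sight is linear in each argument, so each identity reduces to basis
   simplices.  For disjoint S and T the join [S] * [T] is (-1)^c [S \<union> T], where c counts
   the pairs t < s with s in S and t in T, and it is 0 when S and T meet.  Comparing these
   signs face by face gives the Leibniz rule; when S and T share exactly one vertex, the two
   surviving faces of \<partial>[S] * [T] and [S] * \<partial>[T] cancel.  An injective monotone map preserves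
   the counts c, which gives naturality.  For duality, the top degree is spanned by the full
   simplex, and [S] * [T] is \<plusminus>[0..n] exactly when T is the complement of S: the pairing
   matrix in the basis of faces is a signed permutation matrix, hence perfect over Z. *)

theory Submission
  imports Defs
begin

section \<open>Linear maps of chains\<close>

lemma sum_fun_apply: "(sum f A) x = (\<Sum>a\<in>A. f a x)"
  by (induction A rule: infinite_finite_induct) auto

lemma sum_eq_single:
  "finite A \<Longrightarrow> w \<in> A \<Longrightarrow> (\<And>v. v \<in> A \<Longrightarrow> v \<noteq> w \<Longrightarrow> f v = 0) \<Longrightarrow> sum f A = f w"
  by (simp add: sum.remove sum.neutral)

lemma smul_apply: "smul k c U = k * c U"
  by (simp add: smul_def)

lemma basis_apply: "basis S U = (if U = S then 1 else 0)"
  by (simp add: basis_def)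

lemma smul_zero [simp]: "smul k 0 = 0" "smul 0 x = 0"
  by (auto simp: fun_eq_iff smul_apply)

lemma smul_one [simp]: "smul 1 x = x"
  by (simp add: fun_eq_iff smul_apply)

lemma smul_smul: "smul k (smul l x) = smul (k * l) x"
  by (simp add: fun_eq_iff smul_apply)

lemma smul_add: "smul k (x + y) = smul k x + smul k y"
  by (simp add: fun_eq_iff smul_apply algebra_simps)

lemma add_smul: "smul (k + l) x = smul k x + smul l x"
  by (simp add: fun_eq_iff smul_apply algebra_simps)

lemma smul_minus_left: "smul (- k) x = - smul k x"
  by (simp add: fun_eq_iff smul_apply)

lemma smul_sum: "smul k (sum g F) = (\<Sum>i\<in>F. smul k (g i))"
  by (simp add: fun_eq_iff sum_fun_apply smul_apply sum_distrib_left)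

lemma basis_nonzero: "basis S \<noteq> 0"
  by (metis basis_apply zero_fun_apply one_neq_zero)

lemma basis_inject: "basis S = basis T \<longleftrightarrow> S = T"
  by (metis basis_apply zero_neq_one)

lemma sum_smul_basis_delta:
  "finite P \<Longrightarrow> S \<in> P \<Longrightarrow> (\<Sum>S'\<in>P. smul (basis S S') (g S')) = g S"
  by (simp add: fun_eq_iff sum_fun_apply smul_apply basis_apply if_distrib[of "\<lambda>k. k * _"]
      eq_commute[of S] cong: if_cong)

lemma nchains_expansion: "c \<in> nchains N \<Longrightarrow> c = (\<Sum>S\<in>Pow {..<N}. smul (c S) (basis S))"
  by (auto simp: fun_eq_iff nchains_def sum_fun_apply smul_apply basis_apply if_distrib[of "\<lambda>k. _ * k"]
      cong: if_cong)

definition chain_linear :: "(chain \<Rightarrow> chain) \<Rightarrow> bool" where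
  "chain_linear L \<longleftrightarrow> (\<forall>x y. L (x + y) = L x + L y) \<and> (\<forall>k x. L (smul k x) = smul k (L x))"

lemma chain_linear_add: "chain_linear L \<Longrightarrow> L (x + y) = L x + L y"
  by (simp add: chain_linear_def)

lemma chain_linear_smul: "chain_linear L \<Longrightarrow> L (smul k x) = smul k (L x)"
  by (simp add: chain_linear_def)

lemma chain_linear_zero: "chain_linear L \<Longrightarrow> L 0 = 0"
  by (metis chain_linear_smul smul_zero(2))

lemma chain_linear_sum_smul:
  "chain_linear L \<Longrightarrow> L (\<Sum>i\<in>F. smul (k i) (g i)) = (\<Sum>i\<in>F. smul (k i) (L (g i)))"
  by (induction F rule: infinite_finite_induct)
    (auto simp: chain_linear_zero chain_linear_add chain_linear_smul)

lemma chain_linear_expansion: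
  "chain_linear L \<Longrightarrow> c \<in> nchains N \<Longrightarrow> L c = (\<Sum>S\<in>Pow {..<N}. smul (c S) (L (basis S)))"
  by (subst nchains_expansion) (simp_all add: chain_linear_sum_smul)

lemma chain_linear_id: "chain_linear (\<lambda>x. x)"
  by (simp add: chain_linear_def)

lemma chain_linear_comp: "chain_linear L \<Longrightarrow> chain_linear L' \<Longrightarrow> chain_linear (\<lambda>x. L (L' x))"
  by (simp add: chain_linear_def)

lemma chain_linear_plus: "chain_linear L \<Longrightarrow> chain_linear L' \<Longrightarrow> chain_linear (\<lambda>x. L x + L' x)"
  by (simp add: chain_linear_def smul_add)

lemma chain_linear_scaled: "chain_linear L \<Longrightarrow> chain_linear (\<lambda>x. smul k (L x))"
  by (simp add: chain_linear_def smul_add smul_smul mult.commute)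

lemma chain_linear_eq_on_basis:
  assumes "chain_linear L" "chain_linear L'" "c \<in> nchains N"
    and "\<And>S. S \<subseteq> {..<N} \<Longrightarrow> c S \<noteq> 0 \<Longrightarrow> L (basis S) = L' (basis S)"
  shows "L c = L' c"
proof -
  have "smul (c S) (L (basis S)) = smul (c S) (L' (basis S))" if "S \<in> Pow {..<N}" for S
    using assms(4)[of S] that by (cases "c S = 0") auto
  with assms(1-3) show ?thesis
    by (simp add: chain_linear_expansion)
qed

lemma chain_bilinear_eq_on_basis:
  assumes "\<And>y. chain_linear (\<lambda>x. B x y)" "\<And>x. chain_linear (B x)"
    and "\<And>y. chain_linear (\<lambda>x. B' x y)" "\<And>x. chain_linear (B' x)"
    and a: "a \<in> nchains N" and b: "b \<in> nchains N"
    and "\<And>S T. S \<subseteq> {..<N} \<Longrightarrow> T \<subseteq> {..<N} \<Longrightarrow> a S \<noteq> 0 \<Longrightarrow> b T \<noteq> 0 \<Longrightarrow>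
           B (basis S) (basis T) = B' (basis S) (basis T)"
  shows "B a b = B' a b"
  using chain_linear_eq_on_basis[OF assms(1,3) a] chain_linear_eq_on_basis[OF assms(2,4) b] assms(7)
  by metis

lemma chain_linear_join_left: "chain_linear (\<lambda>x. join N x y)"
  and chain_linear_join_right: "chain_linear (join N x)"
  and chain_linear_bdry: "chain_linear (bdry N)"
  and chain_linear_Nmap: "chain_linear (Nmap M f)"
  unfolding chain_linear_def join_def bdry_def Nmap_def
  by (auto simp: fun_eq_iff sum_fun_apply smul_apply algebra_simps sum.distrib sum_distrib_left)

lemma join_basis_basis:
  "S \<subseteq> {..<N} \<Longrightarrow> T \<subseteq> {..<N} \<Longrightarrow> join N (basis S) (basis T) = join_basis S T"
  by (simp add: join_def smul_smul[symmetric] smul_sum[symmetric] sum_smul_basis_delta)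

lemma bdry_of_basis: "S \<subseteq> {..<N} \<Longrightarrow> bdry N (basis S) = bdry_basis S"
  by (simp add: bdry_def sum_smul_basis_delta)

lemma Nmap_of_basis: "S \<subseteq> {..<M} \<Longrightarrow>
    Nmap M f (basis S) = (if inj_on f S then simplex (map f (sorted_list_of_set S)) else 0)"
  by (simp add: Nmap_def sum_smul_basis_delta)

definition below :: "nat \<Rightarrow> nat set \<Rightarrow> nat" where
  "below v S = card {u \<in> S. u < v}"

section \<open>Signs of joins and faces\<close>

text \<open>The exponent of the sign in the join \<open>[S] * [T]\<close>: the number of inversions of S listed
  increasingly followed by T listed increasingly (\<open>inversions_append_sorted\<close>).\<close>

definition crossings :: "nat set \<Rightarrow> nat set \<Rightarrow> nat" where
  "crossings S T = (\<Sum>s\<in>S. below s T)"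

lemma below_nth:
  assumes xs: "sorted_wrt (<) xs" and i: "i < length xs"
  shows "below (xs ! i) (set xs) = i"
proof -
  have "{u \<in> set xs. u < xs ! i} = (!) xs ` {..<i}"
  proof (intro equalityI subsetI)
    fix u assume "u \<in> {u \<in> set xs. u < xs ! i}"
    then obtain k where "k < length xs" "u = xs ! k" "xs ! k < xs ! i"
      by (auto simp: in_set_conv_nth)
    with xs i have "k < i"
      by (metis linorder_neqE_nat order.asym sorted_wrt_nth_less)
    with \<open>u = xs ! k\<close> show "u \<in> (!) xs ` {..<i}" by blast
  qed (use xs i sorted_wrt_nth_less[OF xs] in auto)
  moreover have "inj_on ((!) xs) {..<i}"
    using xs i by (intro inj_on_nth) (auto simp: strict_sorted_iff)
  ultimately show ?thesis
    by (simp add: below_def card_image)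
qed

lemma card_crossing_pairs:
  assumes "finite S" "finite T"
  shows "card {(s, t). s \<in> S \<and> t \<in> T \<and> t < s} = crossings S T"
proof -
  have "{(s, t). s \<in> S \<and> t \<in> T \<and> t < s} = Sigma S (\<lambda>s. {t \<in> T. t < s})" by auto
  with assms show ?thesis
    by (simp add: card_SigmaI crossings_def below_def)
qed

lemma inversions_append_sorted:
  assumes as: "sorted_wrt (<) as" and bs: "sorted_wrt (<) bs" and disj: "set as \<inter> set bs = {}"
  shows "inversions (as @ bs) = crossings (set as) (set bs)"
proof -
  define xs where "xs = as @ bs"
  define I where "I = {(i, j). i < j \<and> j < length xs \<and> xs ! j < xs ! i}"
  define h where "h = (\<lambda>(i, j). (xs ! i, xs ! j))"
  let ?la = "length as"
  have across: "i < ?la \<and> ?la \<le> j" if "(i, j) \<in> I" for i j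
  proof -
    have ij: "i < j" "j < length xs" "xs ! j < xs ! i" using that by (auto simp: I_def)
    have "\<not> j < ?la"
      using ij sorted_wrt_nth_less[OF as, of i j] by (auto simp: xs_def nth_append)
    moreover have "\<not> ?la \<le> i"
      using ij sorted_wrt_nth_less[OF bs, of "i - ?la" "j - ?la"]
      by (auto simp: xs_def nth_append) linarith
    ultimately show ?thesis by simp
  qed
  have "h ` I = {(s, t). s \<in> set as \<and> t \<in> set bs \<and> t < s}"
  proof (intro equalityI subsetI)
    fix p assume "p \<in> h ` I"
    then obtain i j where "(i, j) \<in> I" "p = (xs ! i, xs ! j)" by (auto simp: h_def)
    with across[of i j] show "p \<in> {(s, t). s \<in> set as \<and> t \<in> set bs \<and> t < s}"
      by (auto simp: I_def xs_def nth_append)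
  next
    fix p assume "p \<in> {(s, t). s \<in> set as \<and> t \<in> set bs \<and> t < s}"
    then obtain i k where ik: "i < ?la" "k < length bs" "p = (as ! i, bs ! k)" "bs ! k < as ! i"
      by (auto simp: in_set_conv_nth)
    then have "(i, ?la + k) \<in> I" "h (i, ?la + k) = p"
      by (auto simp: I_def h_def xs_def nth_append)
    then show "p \<in> h ` I" by force
  qed
  moreover have "distinct xs"
    using as bs disj by (simp add: xs_def strict_sorted_iff)
  then have "inj_on h I"
    by (auto simp: inj_on_def h_def I_def nth_eq_iff_index_eq)
  ultimately show ?thesis
    by (simp add: inversions_def flip: I_def xs_def card_image card_crossing_pairs)
qed

lemma crossings_empty [simp]: "crossings S {} = 0" "crossings {} T = 0"
  by (simp_all add: crossings_def below_def)

lemma simplex_sorted: "sorted_wrt (<) xs \<Longrightarrow> simplex xs = basis (set xs)"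
  using inversions_append_sorted[of xs "[]"] by (simp add: simplex_def strict_sorted_iff)

lemma join_basis_eq:
  "finite S \<Longrightarrow> finite T \<Longrightarrow>
   join_basis S T = (if S \<inter> T = {} then smul ((-1) ^ crossings S T) (basis (S \<union> T)) else 0)"
  by (simp add: join_basis_def simplex_def inversions_append_sorted)

lemma bdry_basis_eq:
  assumes "finite S"
  shows "bdry_basis S = (\<Sum>v\<in>S. smul ((-1) ^ below v S) (basis (S - {v})))"
proof -
  define xs where "xs = sorted_list_of_set S"
  have xs: "sorted_wrt (<) xs" "set xs = S" "length xs = card S" "distinct xs"
    using assms by (auto simp: xs_def)
  have "bdry_basis S = (\<Sum>i<card S. smul ((-1) ^ below (xs ! i) S) (basis (S - {xs ! i})))"
    unfolding bdry_basis_def xs_def[symmetric]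
    by (intro sum.cong refl) (metis below_nth xs(1,2,3) lessThan_iff)
  also have "\<dots> = (\<Sum>v\<in>S. smul ((-1) ^ below v S) (basis (S - {v})))"
    using xs by (intro sum.reindex_bij_betw bij_betw_nth) auto
  finally show ?thesis .
qed

lemma below_Un:
  assumes "finite A" "finite B" "A \<inter> B = {}"
  shows "below v (A \<union> B) = below v A + below v B"
proof -
  have "{u \<in> A \<union> B. u < v} = {u \<in> A. u < v} \<union> {u \<in> B. u < v}" by auto
  with assms show ?thesis
    by (simp add: below_def card_Un_disjoint disjoint_iff)
qed

lemma below_Diff_self: "below v (S - {v}) = below v S"
  unfolding below_def by (rule arg_cong[where f = card]) auto

lemma below_plus_above:
  assumes "finite S" "v \<notin> S"
  shows "below v S + card {s \<in> S. v < s} = card S"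
proof -
  have "S = {s \<in> S. s < v} \<union> {s \<in> S. v < s}"
    using assms by (auto simp: not_less_iff_gr_or_eq)
  then have "card S = card ({s \<in> S. s < v} \<union> {s \<in> S. v < s})" by simp
  also have "\<dots> = below v S + card {s \<in> S. v < s}"
    using assms by (subst card_Un_disjoint) (auto simp: below_def)
  finally show ?thesis by simp
qed

lemma crossings_Un_left:
  "finite S1 \<Longrightarrow> finite S2 \<Longrightarrow> S1 \<inter> S2 = {} \<Longrightarrow>
   crossings (S1 \<union> S2) T = crossings S1 T + crossings S2 T"
  by (simp add: crossings_def sum.union_disjoint)

lemma crossings_Un_right:
  "finite T1 \<Longrightarrow> finite T2 \<Longrightarrow> T1 \<inter> T2 = {} \<Longrightarrow>
   crossings S (T1 \<union> T2) = crossings S T1 + crossings S T2"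
  by (simp add: crossings_def below_Un sum.distrib)

lemma crossings_remove_left:
  assumes "finite S" "finite T" "v \<in> S"
  shows "crossings S T = crossings (S - {v}) T + below v T"
  using assms crossings_Un_left[of "S - {v}" "{v}" T]
  by (simp add: crossings_def insert_absorb)

lemma crossings_remove_right:
  assumes "finite S" "finite T" "v \<in> T"
  shows "crossings S T = crossings S (T - {v}) + card {s \<in> S. v < s}"
proof -
  have "crossings S {v} = (\<Sum>s\<in>S. if v < s then 1 else 0)"
    unfolding crossings_def below_def by (intro sum.cong) (auto simp: Collect_conv_if)
  also have "\<dots> = card {s \<in> S. v < s}"
    using \<open>finite S\<close> by (simp add: sum.If_cases Int_def)
  finally have "crossings S {v} = card {s \<in> S. v < s}" .
  with assms crossings_Un_right[of "T - {v}" "{v}" S] show ?thesis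
    by (simp add: insert_absorb)
qed

lemma crossings_swap:
  "finite S \<Longrightarrow> finite T \<Longrightarrow> S \<inter> T = {} \<Longrightarrow> crossings S T + crossings T S = card S * card T"
proof (induction S rule: finite_induct)
  case (insert a S)
  then have "crossings (insert a S) T = crossings S T + below a T"
    using crossings_remove_left[of "insert a S" T a] by simp
  moreover have "crossings T (insert a S) = crossings T S + card {t \<in> T. a < t}"
    using insert crossings_remove_right[of T "insert a S" a] by simp
  moreover have "below a T + card {t \<in> T. a < t} = card T"
    using insert by (intro below_plus_above) auto
  ultimately show ?case using insert by simp
qed simp

section \<open>The Leibniz rule\<close>

lemma minus_one_power_cong: "even (m + n) \<Longrightarrow> (-1::int) ^ m = (-1) ^ n"
  by (auto simp: minus_one_power_iff)

lemma minus_one_power_anti: "odd (m + n) \<Longrightarrow> (-1::int) ^ m = - ((-1) ^ n)"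
  by (auto simp: minus_one_power_iff)

text \<open>The left-hand sides below are the signs of the face of \<open>[S \<union> T]\<close> omitting v in
  \<open>\<partial>([S] * [T])\<close>; the right-hand sides are the signs of the same simplex in
  \<open>\<partial>[S] * [T]\<close> and \<open>[S] * \<partial>[T]\<close>.\<close>

lemma sign_remove_left:
  assumes "finite S" "finite T" "S \<inter> T = {}" "v \<in> S"
  shows "(-1::int) ^ (crossings S T + below v (S \<union> T)) = (-1) ^ (below v S + crossings (S - {v}) T)"
  using assms crossings_remove_left[of S T v] below_Un[of S T v]
  by (intro minus_one_power_cong) presburger

lemma sign_remove_right:
  assumes "finite S" "finite T" "S \<inter> T = {}" "v \<in> T"
  shows "(-1::int) ^ (crossings S T + below v (S \<union> T)) =
         (-1) ^ (card S + below v T + crossings S (T - {v}))"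
proof -
  have "below v S + card {s \<in> S. v < s} = card S"
    using assms by (intro below_plus_above) auto
  with assms crossings_remove_right[of S T v] below_Un[of S T v] show ?thesis
    by (intro minus_one_power_cong) presburger
qed

lemma sign_remove_common:
  assumes "finite S" "finite T" "S \<inter> T = {w}"
  shows "(-1::int) ^ (below w S + crossings (S - {w}) T) =
         - ((-1) ^ (card S + below w T + crossings S (T - {w})))"
proof -
  have w: "w \<in> S" "w \<in> T" using assms by auto
  have "crossings (S - {w}) T = crossings (S - {w}) (T - {w}) + card {s \<in> S - {w}. w < s}"
    using assms w by (intro crossings_remove_right) auto
  moreover have "below w (S - {w}) + card {s \<in> S - {w}. w < s} = card (S - {w})"
    using assms by (intro below_plus_above) auto
  moreover have "card (S - {w}) + 1 = card S"
    using assms w by (metis card_Suc_Diff1 Suc_eq_plus1)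
  moreover have "crossings S (T - {w}) = crossings (S - {w}) (T - {w}) + below w (T - {w})"
    using assms w by (intro crossings_remove_left) auto
  ultimately show ?thesis
    by (intro minus_one_power_anti) (simp add: below_Diff_self; presburger)
qed

lemma join_bdry_basis_left:
  assumes "S \<subseteq> {..<N}" "T \<subseteq> {..<N}"
  shows "join N (bdry_basis S) (basis T) = (\<Sum>v\<in>S. smul ((-1) ^ below v S) (join_basis (S - {v}) T))"
proof -
  have "finite S" using assms finite_subset by blast
  then show ?thesis
    using assms by (auto simp: bdry_basis_eq chain_linear_sum_smul[OF chain_linear_join_left]
        intro!: sum.cong arg_cong[where f = "smul _"] join_basis_basis)
qed

lemma join_bdry_basis_right:
  assumes "S \<subseteq> {..<N}" "T \<subseteq> {..<N}"
  shows "join N (basis S) (bdry_basis T) = (\<Sum>v\<in>T. smul ((-1) ^ below v T) (join_basis S (T - {v})))"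
proof -
  have "finite T" using assms finite_subset by blast
  then show ?thesis
    using assms by (auto simp: bdry_basis_eq chain_linear_sum_smul[OF chain_linear_join_right]
        intro!: sum.cong arg_cong[where f = "smul _"] join_basis_basis)
qed

lemma join_basis_overlap: "finite S \<Longrightarrow> finite T \<Longrightarrow> S \<inter> T \<noteq> {} \<Longrightarrow> join_basis S T = 0"
  by (simp add: join_basis_eq)

lemma bdry_join_basis_disjoint:
  assumes S: "S \<subseteq> {..<N}" and T: "T \<subseteq> {..<N}" and disj: "S \<inter> T = {}"
  shows "bdry N (join_basis S T) =
         join N (bdry_basis S) (basis T) + smul ((-1) ^ card S) (join N (basis S) (bdry_basis T))"
proof -
  have fin: "finite S" "finite T" using S T finite_subset by blast+
  let ?term = "\<lambda>v. smul ((-1) ^ (crossings S T + below v (S \<union> T))) (basis (S \<union> T - {v}))"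
  have "bdry N (join_basis S T) = (\<Sum>v\<in>S \<union> T. ?term v)"
    using S T disj fin by (simp add: join_basis_eq chain_linear_smul[OF chain_linear_bdry] bdry_of_basis
        bdry_basis_eq smul_sum smul_smul power_add)
  also have "\<dots> = (\<Sum>v\<in>S. ?term v) + (\<Sum>v\<in>T. ?term v)"
    using fin disj by (rule sum.union_disjoint)
  also have "(\<Sum>v\<in>S. ?term v) = join N (bdry_basis S) (basis T)"
    unfolding join_bdry_basis_left[OF S T]
  proof (intro sum.cong refl)
    fix v assume "v \<in> S"
    moreover have "(S - {v}) \<inter> T = {}" "S - {v} \<union> T = S \<union> T - {v}"
      using disj \<open>v \<in> S\<close> by auto
    ultimately show "?term v = smul ((-1) ^ below v S) (join_basis (S - {v}) T)"
      using fin disj sign_remove_left[of S T v] by (simp add: join_basis_eq smul_smul power_add)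
  qed
  also have "(\<Sum>v\<in>T. ?term v) = smul ((-1) ^ card S) (join N (basis S) (bdry_basis T))"
    unfolding join_bdry_basis_right[OF S T] smul_sum
  proof (intro sum.cong refl)
    fix v assume "v \<in> T"
    moreover have "S \<inter> (T - {v}) = {}" "S \<union> (T - {v}) = S \<union> T - {v}"
      using disj \<open>v \<in> T\<close> by auto
    ultimately show "?term v = smul ((-1) ^ card S) (smul ((-1) ^ below v T) (join_basis S (T - {v})))"
      using fin disj sign_remove_right[of S T v]
      by (simp add: join_basis_eq smul_smul power_add mult.assoc)
  qed
  finally show ?thesis .
qed

lemma join_bdry_basis_left_single_overlap:
  assumes S: "S \<subseteq> {..<N}" and T: "T \<subseteq> {..<N}" and w: "S \<inter> T = {w}"
  shows "join N (bdry_basis S) (basis T) = smul ((-1) ^ (below w S + crossings (S - {w}) T)) (basis (S \<union> T))"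
proof -
  have fin: "finite S" "finite T" using S T finite_subset by blast+
  have "join N (bdry_basis S) (basis T) = smul ((-1) ^ below w S) (join_basis (S - {w}) T)"
    unfolding join_bdry_basis_left[OF S T]
  proof (rule sum_eq_single)
    fix v assume "v \<in> S" "v \<noteq> w"
    with w have "(S - {v}) \<inter> T \<noteq> {}" by blast
    with fin show "smul ((-1) ^ below v S) (join_basis (S - {v}) T) = 0"
      by (simp add: join_basis_overlap)
  qed (use fin w in auto)
  also have "(S - {w}) \<inter> T = {}" "S - {w} \<union> T = S \<union> T" using w by auto
  then have "smul ((-1) ^ below w S) (join_basis (S - {w}) T) =
             smul ((-1) ^ (below w S + crossings (S - {w}) T)) (basis (S \<union> T))"
    using fin by (simp add: join_basis_eq smul_smul power_add)
  finally show ?thesis .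
qed

lemma join_bdry_basis_right_single_overlap:
  assumes S: "S \<subseteq> {..<N}" and T: "T \<subseteq> {..<N}" and w: "S \<inter> T = {w}"
  shows "join N (basis S) (bdry_basis T) = smul ((-1) ^ (below w T + crossings S (T - {w}))) (basis (S \<union> T))"
proof -
  have fin: "finite S" "finite T" using S T finite_subset by blast+
  have "join N (basis S) (bdry_basis T) = smul ((-1) ^ below w T) (join_basis S (T - {w}))"
    unfolding join_bdry_basis_right[OF S T]
  proof (rule sum_eq_single)
    fix v assume "v \<in> T" "v \<noteq> w"
    with w have "S \<inter> (T - {v}) \<noteq> {}" by blast
    with fin show "smul ((-1) ^ below v T) (join_basis S (T - {v})) = 0"
      by (simp add: join_basis_overlap)
  qed (use fin w in auto)
  also have "S \<inter> (T - {w}) = {}" "S \<union> (T - {w}) = S \<union> T" using w by auto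
  then have "smul ((-1) ^ below w T) (join_basis S (T - {w})) =
             smul ((-1) ^ (below w T + crossings S (T - {w}))) (basis (S \<union> T))"
    using fin by (simp add: join_basis_eq smul_smul power_add)
  finally show ?thesis .
qed

text \<open>If S and T share two or more vertices, every face of S still meets T and vice versa,
  so both sides vanish termwise; if they share exactly one, only the faces omitting it
  survive, and these two terms cancel.\<close>

lemma leibniz_basis_overlap:
  assumes S: "S \<subseteq> {..<N}" and T: "T \<subseteq> {..<N}" and overlap: "S \<inter> T \<noteq> {}"
  shows "join N (bdry_basis S) (basis T) + smul ((-1) ^ card S) (join N (basis S) (bdry_basis T)) = 0"
proof (cases "\<exists>w. S \<inter> T = {w}")
  case True
  then obtain w where w: "S \<inter> T = {w}" by blast
  have fin: "finite S" "finite T" using S T finite_subset by blast+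
  show ?thesis
    unfolding join_bdry_basis_left_single_overlap[OF S T w] join_bdry_basis_right_single_overlap[OF S T w]
      smul_smul sign_remove_common[OF fin w] add_smul[symmetric]
    by (simp add: power_add mult.assoc)
next
  case False
  with overlap have "(S - {v}) \<inter> T \<noteq> {}" "S \<inter> (T - {v}) \<noteq> {}" for v
    by blast+
  moreover have "finite S" "finite T" using S T finite_subset by blast+
  ultimately show ?thesis
    by (simp add: join_bdry_basis_left[OF S T] join_bdry_basis_right[OF S T] join_basis_overlap)
qed

lemma bdry_join_basis:
  assumes S: "S \<subseteq> {..<N}" and T: "T \<subseteq> {..<N}"
  shows "bdry N (join N (basis S) (basis T)) =
         join N (bdry N (basis S)) (basis T) + smul ((-1) ^ card S) (join N (basis S) (bdry N (basis T)))"
proof (cases "S \<inter> T = {}")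
  case True
  then show ?thesis
    using S T by (simp add: join_basis_basis bdry_of_basis bdry_join_basis_disjoint)
next
  case False
  have "finite S" "finite T" using S T finite_subset by blast+
  with False show ?thesis
    using S T by (simp add: join_basis_basis bdry_of_basis leibniz_basis_overlap join_basis_overlap
        chain_linear_zero[OF chain_linear_bdry])
qed

lemma bdry_join:
  assumes a: "a \<in> hom N p" and b: "b \<in> nchains N"
  shows "bdry N (join N a b) = join N (bdry N a) b + smul ((-1) ^ p) (join N a (bdry N b))"
proof (rule chain_bilinear_eq_on_basis[where B = "\<lambda>x y. bdry N (join N x y)"])
  show "a \<in> nchains N" using a by (simp add: hom_def)
  show "bdry N (join N (basis S) (basis T)) =
        join N (bdry N (basis S)) (basis T) + smul ((-1) ^ p) (join N (basis S) (bdry N (basis T)))"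
    if "S \<subseteq> {..<N}" "T \<subseteq> {..<N}" "a S \<noteq> 0" for S T
    using that a bdry_join_basis[of S N T] by (simp add: hom_def)
next
  show "chain_linear (\<lambda>x. bdry N (join N x y))" for y
    by (rule chain_linear_comp[OF chain_linear_bdry chain_linear_join_left])
  show "chain_linear (\<lambda>y. bdry N (join N x y))" for x
    by (rule chain_linear_comp[OF chain_linear_bdry chain_linear_join_right])
  show "chain_linear (\<lambda>x. join N (bdry N x) y + smul ((-1) ^ p) (join N x (bdry N y)))" for y
    by (intro chain_linear_plus chain_linear_scaled chain_linear_join_left
        chain_linear_comp[OF chain_linear_join_left chain_linear_bdry])
  show "chain_linear (\<lambda>y. join N (bdry N x) y + smul ((-1) ^ p) (join N x (bdry N y)))" for x
    by (intro chain_linear_plus chain_linear_scaled chain_linear_join_right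
        chain_linear_comp[OF chain_linear_join_right chain_linear_bdry])
qed (use b in simp)

section \<open>Naturality\<close>

lemma simplex_map_less_iff:
  assumes f: "simplex_map M N f" and U: "U \<subseteq> {..<M}" and inj: "inj_on f U"
    and x: "x \<in> U" and y: "y \<in> U"
  shows "f x < f y \<longleftrightarrow> x < y"
proof
  assume "x < y"
  with f U y have "f x \<le> f y" by (auto simp: simplex_map_def)
  moreover have "f x \<noteq> f y" using inj x y \<open>x < y\<close> by (auto dest: inj_onD)
  ultimately show "f x < f y" by simp
next
  assume "f x < f y"
  show "x < y"
  proof (rule ccontr)
    assume "\<not> x < y"
    with f U x have "f y \<le> f x" by (auto simp: simplex_map_def)
    with \<open>f x < f y\<close> show False by simp
  qed
qed

lemma simplex_map_image: "simplex_map M N f \<Longrightarrow> S \<subseteq> {..<M} \<Longrightarrow> f ` S \<subseteq> {..<N}"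
  by (auto simp: simplex_map_def)

lemma Nmap_basis_simplex_map:
  assumes f: "simplex_map M N f" and S: "S \<subseteq> {..<M}"
  shows "Nmap M f (basis S) = (if inj_on f S then basis (f ` S) else 0)"
proof (cases "inj_on f S")
  case True
  have fin: "finite S" using S finite_subset by blast
  have "sorted_wrt (<) (sorted_list_of_set S)" by simp
  then have "sorted_wrt (<) (map f (sorted_list_of_set S))"
    unfolding sorted_wrt_map
    by (rule sorted_wrt_mono_rel[rotated]) (use simplex_map_less_iff[OF f S True] fin in auto)
  with True S fin show ?thesis by (simp add: Nmap_of_basis simplex_sorted)
qed (use S in \<open>simp add: Nmap_of_basis\<close>)

lemma crossings_image:
  assumes f: "simplex_map M N f" and U: "S \<union> T \<subseteq> {..<M}" and inj: "inj_on f (S \<union> T)"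
  shows "crossings (f ` S) (f ` T) = crossings S T"
proof -
  have "below (f s) (f ` T) = below s T" if "s \<in> S" for s
  proof -
    have "{u \<in> f ` T. u < f s} = f ` {t \<in> T. t < s}"
      using simplex_map_less_iff[OF f U inj] that by auto
    moreover have "inj_on f {t \<in> T. t < s}" using inj by (rule inj_on_subset) blast
    ultimately show ?thesis by (simp add: below_def card_image)
  qed
  moreover have "inj_on f S" using inj by (rule inj_on_subset) blast
  ultimately show ?thesis by (simp add: crossings_def sum.reindex)
qed

lemma Nmap_join_basis:
  assumes f: "simplex_map M N f" and S: "S \<subseteq> {..<M}" and T: "T \<subseteq> {..<M}"
  shows "Nmap M f (join_basis S T) = join N (Nmap M f (basis S)) (Nmap M f (basis T))"
proof -
  have fin: "finite S" "finite T" using S T finite_subset by blast+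
  have U: "S \<union> T \<subseteq> {..<M}" using S T by auto
  have right: "join N (Nmap M f (basis S)) (Nmap M f (basis T)) =
      (if inj_on f S \<and> inj_on f T then join_basis (f ` S) (f ` T) else 0)"
    using simplex_map_image[OF f S] simplex_map_image[OF f T]
    by (simp add: Nmap_basis_simplex_map[OF f S] Nmap_basis_simplex_map[OF f T] join_basis_basis
        chain_linear_zero[OF chain_linear_join_left] chain_linear_zero[OF chain_linear_join_right])
  consider "S \<inter> T \<noteq> {}" | "S \<inter> T = {}" "inj_on f (S \<union> T)" | "S \<inter> T = {}" "\<not> inj_on f (S \<union> T)"
    by blast
  then show ?thesis
  proof cases
    case 1
    then have "f ` S \<inter> f ` T \<noteq> {}" by blast
    with 1 fin show ?thesis
      by (simp add: right join_basis_overlap chain_linear_zero[OF chain_linear_Nmap])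
  next
    case 2
    then have "inj_on f S" "inj_on f T" "f ` S \<inter> f ` T = {}"
      by (auto simp: inj_on_Un)
    with 2 fin show ?thesis
      by (simp add: right join_basis_eq chain_linear_smul[OF chain_linear_Nmap] Nmap_basis_simplex_map[OF f U]
          crossings_image[OF f U] image_Un)
  next
    case 3
    then have "\<not> (inj_on f S \<and> inj_on f T) \<or> f ` S \<inter> f ` T \<noteq> {}"
      by (auto simp: inj_on_Un)
    with 3 fin show ?thesis
      by (auto simp: right join_basis_eq chain_linear_smul[OF chain_linear_Nmap] Nmap_basis_simplex_map[OF f U])
  qed
qed

lemma Nmap_join:
  assumes f: "simplex_map M N f" and a: "a \<in> nchains M" and b: "b \<in> nchains M"
  shows "Nmap M f (join M a b) = join N (Nmap M f a) (Nmap M f b)"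
proof (rule chain_bilinear_eq_on_basis[OF _ _ _ _ a b])
  show "Nmap M f (join M (basis S) (basis T)) = join N (Nmap M f (basis S)) (Nmap M f (basis T))"
    if "S \<subseteq> {..<M}" "T \<subseteq> {..<M}" for S T
    using that by (simp add: join_basis_basis Nmap_join_basis[OF f])
  show "chain_linear (\<lambda>x. Nmap M f (join M x y))" for y
    by (rule chain_linear_comp[OF chain_linear_Nmap chain_linear_join_left])
  show "chain_linear (\<lambda>y. Nmap M f (join M x y))" for x
    by (rule chain_linear_comp[OF chain_linear_Nmap chain_linear_join_right])
  show "chain_linear (\<lambda>x. join N (Nmap M f x) (Nmap M f y))" for y
    by (rule chain_linear_comp[OF chain_linear_join_left chain_linear_Nmap])
  show "chain_linear (\<lambda>y. join N (Nmap M f x) (Nmap M f y))" for x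
    by (rule chain_linear_comp[OF chain_linear_join_right chain_linear_Nmap])
qed

section \<open>The graded commutative algebra\<close>

lemma nchains_zero: "0 \<in> nchains N"
  and nchains_smul: "c \<in> nchains N \<Longrightarrow> smul k c \<in> nchains N"
  by (auto simp: nchains_def smul_apply)

lemma nchains_add:
  assumes "c \<in> nchains N" "c' \<in> nchains N"
  shows "c + c' \<in> nchains N"
  unfolding nchains_def
proof (intro CollectI allI impI)
  fix S assume "(c + c') S \<noteq> 0"
  then have "c S \<noteq> 0 \<or> c' S \<noteq> 0" by auto
  with assms show "S \<subseteq> {..<N}" by (auto simp: nchains_def)
qed

lemma nchains_sum: "(\<And>i. i \<in> F \<Longrightarrow> g i \<in> nchains N) \<Longrightarrow> sum g F \<in> nchains N"
  by (induction F rule: infinite_finite_induct) (auto intro: nchains_zero nchains_add)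

lemma hom_nchains: "c \<in> hom N k \<Longrightarrow> c \<in> nchains N"
  by (simp add: hom_def)

lemma hom_zero: "0 \<in> hom N k"
  and hom_smul: "c \<in> hom N k \<Longrightarrow> smul m c \<in> hom N k"
  and hom_uminus: "c \<in> hom N k \<Longrightarrow> - c \<in> hom N k"
  by (auto simp: hom_def nchains_def smul_apply)

lemma hom_add:
  assumes "c \<in> hom N k" "c' \<in> hom N k"
  shows "c + c' \<in> hom N k"
  unfolding hom_def
proof (intro CollectI conjI allI impI)
  show "c + c' \<in> nchains N" using assms by (simp add: hom_def nchains_add)
  fix S assume "(c + c') S \<noteq> 0"
  then have "c S \<noteq> 0 \<or> c' S \<noteq> 0" by auto
  with assms show "card S = k" by (auto simp: hom_def)
qed

lemma hom_sum: "(\<And>i. i \<in> F \<Longrightarrow> g i \<in> hom N k) \<Longrightarrow> sum g F \<in> hom N k"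
  by (induction F rule: infinite_finite_induct) (auto intro: hom_zero hom_add)

lemma basis_in_hom: "S \<subseteq> {..<N} \<Longrightarrow> basis S \<in> hom N (card S)"
  by (auto simp: hom_def nchains_def basis_apply)

lemma nchains_vanish_above:
  assumes "c \<in> nchains N" "N < card U"
  shows "c U = 0"
proof (rule ccontr)
  assume "c U \<noteq> 0"
  with assms(1) have "U \<subseteq> {..<N}" by (simp add: nchains_def)
  then have "card U \<le> N" using card_mono[of "{..<N}" U] by simp
  with assms(2) show False by simp
qed

lemma hom_above:
  assumes "N < k"
  shows "hom N k = {0}"
proof -
  have "c = 0" if "c \<in> hom N k" for c
    using that assms nchains_vanish_above[of c N] by (auto simp: hom_def fun_eq_iff)
  then show ?thesis using hom_zero by blast
qed

lemma hom_expansion: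
  assumes "c \<in> hom N k"
  shows "c = (\<Sum>S\<in>{S \<in> Pow {..<N}. card S = k}. smul (c S) (basis S))"
proof -
  have "smul (c S) (basis S) = 0" if "card S \<noteq> k" for S
    using assms that by (cases "c S = 0") (auto simp: hom_def)
  with assms show ?thesis
    by (subst nchains_expansion[of c N]) (auto simp: hom_def intro!: sum.mono_neutral_right)
qed

lemma join_basis_in_hom:
  assumes "S \<subseteq> {..<N}" "T \<subseteq> {..<N}"
  shows "join_basis S T \<in> hom N (card S + card T)"
proof -
  have "finite S" "finite T" using assms finite_subset by blast+
  moreover have "basis (S \<union> T) \<in> hom N (card (S \<union> T))"
    using assms by (intro basis_in_hom) auto
  ultimately show ?thesis
    by (cases "S \<inter> T = {}") (simp_all add: join_basis_eq card_Un_disjoint hom_zero hom_smul)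
qed

lemma join_in_nchains: "join N x y \<in> nchains N"
  unfolding join_def
  by (intro nchains_sum nchains_smul; rule hom_nchains[OF join_basis_in_hom]; blast)

lemma join_in_hom:
  assumes x: "x \<in> hom N i" and y: "y \<in> hom N j"
  shows "join N x y \<in> hom N (i + j)"
  unfolding join_def
proof (intro hom_sum)
  fix S T assume ST: "S \<in> Pow {..<N}" "T \<in> Pow {..<N}"
  show "smul (x S * y T) (join_basis S T) \<in> hom N (i + j)"
  proof (cases "x S = 0 \<or> y T = 0")
    case False
    with x y have "card S = i" "card T = j" by (auto simp: hom_def)
    with ST show ?thesis by (auto intro: hom_smul join_basis_in_hom)
  qed (auto intro: hom_zero)
qed

lemma join_unit_left:
  assumes "x \<in> nchains N"
  shows "join N (basis {}) x = x"
proof (rule chain_linear_eq_on_basis[OF chain_linear_join_right chain_linear_id assms])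
  fix S assume S: "S \<subseteq> {..<N}"
  then have "finite S" by (rule finite_subset) simp
  with S show "join N (basis {}) (basis S) = basis S"
    by (simp add: join_basis_basis join_basis_eq)
qed

lemma join_unit_right:
  assumes "x \<in> nchains N"
  shows "join N x (basis {}) = x"
proof (rule chain_linear_eq_on_basis[OF chain_linear_join_left chain_linear_id assms])
  fix S assume S: "S \<subseteq> {..<N}"
  then have "finite S" by (rule finite_subset) simp
  with S show "join N (basis S) (basis {}) = basis S"
    by (simp add: join_basis_basis join_basis_eq)
qed

lemma join_assoc_basis:
  assumes S: "S \<subseteq> {..<N}" and T: "T \<subseteq> {..<N}" and U: "U \<subseteq> {..<N}"
  shows "join N (join_basis S T) (basis U) = join N (basis S) (join_basis T U)"
proof -
  have fin: "finite S" "finite T" "finite U" using S T U finite_subset by blast+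
  show ?thesis
  proof (cases "S \<inter> T = {} \<and> (S \<union> T) \<inter> U = {}")
    case True
    then have "crossings S T + crossings (S \<union> T) U = crossings T U + crossings S (T \<union> U)"
      using fin by (simp add: crossings_Un_left crossings_Un_right Int_Un_distrib Int_Un_distrib2)
    with True fin S T U show ?thesis
      by (simp add: join_basis_eq chain_linear_smul[OF chain_linear_join_left]
          chain_linear_smul[OF chain_linear_join_right] join_basis_basis smul_smul Un_assoc
          Int_Un_distrib Int_Un_distrib2 flip: power_add)
  next
    case False
    with fin S T U show ?thesis
      by (auto simp: join_basis_eq chain_linear_smul[OF chain_linear_join_left]
          chain_linear_smul[OF chain_linear_join_right] chain_linear_zero[OF chain_linear_join_left]
          chain_linear_zero[OF chain_linear_join_right] join_basis_basis)
  qed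
qed

lemma join_assoc:
  assumes x: "x \<in> nchains N" and y: "y \<in> nchains N" and z: "z \<in> nchains N"
  shows "join N (join N x y) z = join N x (join N y z)"
proof (rule chain_linear_eq_on_basis[OF _ _ z])
  fix U assume U: "U \<subseteq> {..<N}"
  show "join N (join N x y) (basis U) = join N x (join N y (basis U))"
  proof (rule chain_bilinear_eq_on_basis[OF _ _ _ _ x y])
    show "join N (join N (basis S) (basis T)) (basis U) = join N (basis S) (join N (basis T) (basis U))"
      if "S \<subseteq> {..<N}" "T \<subseteq> {..<N}" for S T
      using that U by (simp add: join_basis_basis join_assoc_basis)
  next
    show "chain_linear (\<lambda>x. join N (join N x y) (basis U))" for y
      by (rule chain_linear_comp[OF chain_linear_join_left chain_linear_join_left])
    show "chain_linear (\<lambda>y. join N (join N x y) (basis U))" for x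
      by (rule chain_linear_comp[OF chain_linear_join_left chain_linear_join_right])
    show "chain_linear (\<lambda>x. join N x (join N y (basis U)))" for y
      by (rule chain_linear_join_left)
    show "chain_linear (\<lambda>y. join N x (join N y (basis U)))" for x
      by (rule chain_linear_comp[OF chain_linear_join_right chain_linear_join_left])
  qed
next
  show "chain_linear (join N (join N x y))" by (rule chain_linear_join_right)
  show "chain_linear (\<lambda>z. join N x (join N y z))"
    by (rule chain_linear_comp[OF chain_linear_join_right chain_linear_join_right])
qed

lemma join_basis_commute:
  assumes "finite S" "finite T"
  shows "join_basis S T = smul ((-1) ^ (card S * card T)) (join_basis T S)"
proof (cases "S \<inter> T = {}")
  case True
  have "(-1::int) ^ crossings S T = (-1) ^ (card S * card T) * (-1) ^ crossings T S"
    unfolding power_add[symmetric] using True assms crossings_swap[of S T]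
    by (intro minus_one_power_cong) presburger
  with True assms show ?thesis
    by (simp add: join_basis_eq smul_smul Un_commute Int_commute)
qed (use assms in \<open>simp add: join_basis_eq Int_commute\<close>)

lemma join_commute:
  assumes x: "x \<in> hom N i" and y: "y \<in> hom N j"
  shows "join N x y = smul ((-1) ^ (i * j)) (join N y x)"
proof (rule chain_bilinear_eq_on_basis[OF _ _ _ _ hom_nchains[OF x] hom_nchains[OF y]])
  fix S T assume S: "S \<subseteq> {..<N}" and T: "T \<subseteq> {..<N}" and "x S \<noteq> 0" "y T \<noteq> 0"
  with x y have "card S = i" "card T = j" by (auto simp: hom_def)
  moreover have "finite S" "finite T" using S T by (auto intro: finite_subset)
  ultimately show "join N (basis S) (basis T) = smul ((-1) ^ (i * j)) (join N (basis T) (basis S))"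
    using S T by (simp add: join_basis_basis join_basis_commute[of S T])
next
  show "chain_linear (\<lambda>x. smul ((-1) ^ (i * j)) (join N y x))" for y
    by (rule chain_linear_scaled[OF chain_linear_join_right])
  show "chain_linear (\<lambda>y. smul ((-1) ^ (i * j)) (join N y x))" for x
    by (rule chain_linear_scaled[OF chain_linear_join_left])
qed (rule chain_linear_join_left chain_linear_join_right)+

section \<open>Poincare duality\<close>

lemma hom_eq_multiples:
  assumes S0: "S0 \<subseteq> {..<N}" "card S0 = k"
    and unique: "\<And>S. S \<subseteq> {..<N} \<Longrightarrow> card S = k \<Longrightarrow> S = S0"
  shows "hom N k = range (\<lambda>m. smul m (basis S0))"
proof (intro equalityI subsetI)
  fix c assume c: "c \<in> hom N k"
  have "c = (\<Sum>S\<in>{S \<in> Pow {..<N}. card S = k}. smul (c S) (basis S))"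
    by (rule hom_expansion[OF c])
  also have "{S \<in> Pow {..<N}. card S = k} = {S0}" using S0 unique by blast
  also have "(\<Sum>S\<in>{S0}. smul (c S) (basis S)) = smul (c S0) (basis S0)" by simp
  finally show "c \<in> range (\<lambda>m. smul m (basis S0))" by (rule range_eqI)
next
  fix c assume "c \<in> range (\<lambda>m. smul m (basis S0))"
  then obtain m where "c = smul m (basis S0)" by blast
  with S0 basis_in_hom[OF S0(1)] show "c \<in> hom N k" by (simp add: hom_smul)
qed

lemma hom_degree_zero: "hom N 0 = range (\<lambda>m. smul m (basis {}))"
proof (rule hom_eq_multiples)
  fix S assume "S \<subseteq> {..<N}" "card S = 0"
  then show "S = {}" using finite_subset[of S "{..<N}"] by auto
qed auto

lemma hom_top_degree: "hom N N = range (\<lambda>m. smul m (basis {..<N}))"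
proof (rule hom_eq_multiples)
  fix S assume "S \<subseteq> {..<N}" "card S = N"
  then show "S = {..<N}" using card_subset_eq[of "{..<N}" S] by simp
qed auto

lemma hom_eq_span: "hom N k = span_Z (basis ` {S \<in> Pow {..<N}. card S = k})"
  (is "_ = span_Z (basis ` ?B)")
proof (intro equalityI subsetI)
  have inj: "inj_on basis ?B" by (simp add: inj_on_def basis_inject)
  fix c assume c: "c \<in> hom N k"
  define coeff where "coeff = (\<lambda>g. c (the_inv_into ?B basis g))"
  have "c = (\<Sum>S\<in>?B. smul (c S) (basis S))" by (rule hom_expansion[OF c])
  also have "\<dots> = (\<Sum>S\<in>?B. smul (coeff (basis S)) (basis S))"
    unfolding coeff_def by (intro sum.cong refl) (simp only: the_inv_into_f_f[OF inj])
  also have "\<dots> = (\<Sum>g\<in>basis ` ?B. smul (coeff g) g)"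
    by (rule sum.reindex[OF inj, unfolded comp_def, symmetric])
  finally show "c \<in> span_Z (basis ` ?B)"
    unfolding span_Z_def by (intro CollectI exI[of _ "basis ` ?B"] exI[of _ coeff]) simp
next
  fix c assume "c \<in> span_Z (basis ` ?B)"
  then obtain F coeff where F: "F \<subseteq> basis ` ?B" and c: "c = (\<Sum>g\<in>F. smul (coeff g) g)"
    unfolding span_Z_def by blast
  have "g \<in> hom N k" if "g \<in> F" for g
    using F that by (auto intro: basis_in_hom[of _ N, simplified])
  then show "c \<in> hom N k" unfolding c by (intro hom_sum hom_smul)
qed

lemma sum_hom_apply:
  assumes "\<forall>k. cs k \<in> hom N k"
  shows "(\<Sum>k\<le>d. cs k) U = (if card U \<le> d then cs (card U) U else 0)"
proof -
  have "(\<Sum>k\<le>d. cs k) U = (\<Sum>k\<le>d. if card U = k then cs k U else 0)"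
    unfolding sum_fun_apply using assms by (intro sum.cong refl) (auto simp: hom_def)
  then show ?thesis by simp
qed

lemma nchains_graded_decomposition:
  assumes c: "c \<in> nchains N"
  shows "\<exists>!cs. (\<forall>k. cs k \<in> hom N k) \<and> (\<forall>k>N. cs k = 0) \<and> c = (\<Sum>k\<le>N. cs k)"
proof (rule ex1I)
  let ?cs = "\<lambda>k U. if card U = k then c U else 0"
  have hom: "\<forall>k. ?cs k \<in> hom N k" using c by (auto simp: hom_def nchains_def)
  then show "(\<forall>k. ?cs k \<in> hom N k) \<and> (\<forall>k>N. ?cs k = 0) \<and> c = (\<Sum>k\<le>N. ?cs k)"
    using nchains_vanish_above[OF c] by (auto simp: fun_eq_iff sum_hom_apply[OF hom])
  fix cs assume cs: "(\<forall>k. cs k \<in> hom N k) \<and> (\<forall>k>N. cs k = 0) \<and> c = (\<Sum>k\<le>N. cs k)"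
  show "cs = ?cs"
  proof (intro ext)
    fix k :: nat and U :: "nat set"
    consider "card U \<noteq> k" | "card U = k" "k \<le> N" | "card U = k" "N < k" by linarith
    then show "cs k U = ?cs k U"
    proof cases
      case 2
      with cs sum_hom_apply[of cs N N U] show ?thesis by auto
    qed (use cs nchains_vanish_above[OF c] in \<open>auto simp: hom_def\<close>)
  qed
qed

lemma card_complement: "T \<subseteq> {..<N} \<Longrightarrow> card ({..<N} - T) = N - card T"
  by (simp add: card_Diff_subset finite_subset)

lemma join_complement:
  assumes a: "a \<in> hom N i" and T: "T \<subseteq> {..<N}" "card T = N - i" and i: "i \<le> N"
  shows "join N a (basis T) = smul (a ({..<N} - T) * (-1) ^ crossings ({..<N} - T) T) (basis {..<N})"
proof -
  let ?W = "{..<N}"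
  have fT: "finite T" using T finite_subset[of T ?W] by auto
  have card_compl: "card (?W - T) = i" using T i by (simp add: card_complement)
  have "join N a (basis T) = (\<Sum>S\<in>Pow ?W. smul (a S) (join_basis S T))"
    using T by (simp add: chain_linear_expansion[OF chain_linear_join_left hom_nchains[OF a]]
        join_basis_basis)
  also have "\<dots> = smul (a (?W - T)) (join_basis (?W - T) T)"
  proof (rule sum_eq_single)
    fix S assume S: "S \<in> Pow ?W" "S \<noteq> ?W - T"
    show "smul (a S) (join_basis S T) = 0"
    proof (cases "a S = 0")
      case False
      with a have "card S = i" by (auto simp: hom_def)
      with S card_compl have "\<not> S \<subseteq> ?W - T"
        using card_subset_eq[of "?W - T" S] by auto
      with S have "S \<inter> T \<noteq> {}" by blast
      moreover have "finite S" using S finite_subset[of S ?W] by auto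
      ultimately show ?thesis using fT by (simp add: join_basis_overlap)
    qed simp
  qed auto
  also have "(?W - T) \<inter> T = {}" "(?W - T) \<union> T = ?W" using T by auto
  then have "smul (a (?W - T)) (join_basis (?W - T) T) =
             smul (a (?W - T) * (-1) ^ crossings (?W - T) T) (basis ?W)"
    using fT by (simp add: join_basis_eq smul_smul)
  finally show ?thesis .
qed

context
  fixes A :: "chain set" and \<phi> :: "chain \<Rightarrow> chain"
  assumes zero_closed: "0 \<in> A"
    and add_closed: "\<And>x y. x \<in> A \<Longrightarrow> y \<in> A \<Longrightarrow> x + y \<in> A"
    and smul_closed: "\<And>k x. x \<in> A \<Longrightarrow> smul k x \<in> A"
    and additive: "\<And>x y. x \<in> A \<Longrightarrow> y \<in> A \<Longrightarrow> \<phi> (x + y) = \<phi> x + \<phi> y"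
begin

lemma additive_zero: "\<phi> 0 = 0"
  using additive[OF zero_closed zero_closed] by simp

lemma additive_smul_nat: "x \<in> A \<Longrightarrow> \<phi> (smul (int n) x) = smul (int n) (\<phi> x)"
proof (induction n)
  case 0
  show ?case by (simp only: of_nat_0 smul_zero additive_zero)
next
  case (Suc n)
  have "smul (int (Suc n)) x = smul (int n) x + x" by (simp add: fun_eq_iff smul_apply algebra_simps)
  then have "\<phi> (smul (int (Suc n)) x) = \<phi> (smul (int n) x + x)" by (rule arg_cong)
  also have "\<dots> = smul (int n) (\<phi> x) + \<phi> x" using Suc by (simp add: additive smul_closed)
  also have "\<dots> = smul (int (Suc n)) (\<phi> x)" by (simp add: fun_eq_iff smul_apply algebra_simps)
  finally show ?case .
qed

lemma additive_smul:
  assumes x: "x \<in> A"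
  shows "\<phi> (smul k x) = smul k (\<phi> x)"
proof (cases k rule: int_cases2)
  case (nonpos n)
  have "\<phi> (smul k x) + \<phi> (smul (int n) x) = \<phi> (smul k x + smul (int n) x)"
    using x by (simp add: additive smul_closed)
  also have "\<dots> = 0" using nonpos by (simp add: additive_zero flip: add_smul)
  finally show ?thesis
    using additive_smul_nat[OF x, of n] by (simp add: nonpos smul_minus_left eq_neg_iff_add_eq_0)
qed (simp add: additive_smul_nat x)

lemma additive_sum: "(\<And>i. i \<in> F \<Longrightarrow> g i \<in> A) \<Longrightarrow> \<phi> (sum g F) = (\<Sum>i\<in>F. \<phi> (g i))"
proof (induction F rule: infinite_finite_induct)
  case (insert j F)
  have sum_in: "sum g F \<in> A"
    using insert.prems by (induction F rule: infinite_finite_induct) (auto intro: zero_closed add_closed)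
  have IH: "\<phi> (sum g F) = (\<Sum>i\<in>F. \<phi> (g i))"
    using insert.IH insert.prems by blast
  have "\<phi> (sum g (insert j F)) = \<phi> (g j + sum g F)"
    using insert.hyps by (subst sum.insert) auto
  also have "\<dots> = \<phi> (g j) + \<phi> (sum g F)"
    using insert.prems sum_in by (intro additive) auto
  also have "\<dots> = (\<Sum>i\<in>insert j F. \<phi> (g i))"
    unfolding IH using insert.hyps by (rule sum.insert[symmetric])
  finally show ?case .
qed (auto simp: additive_zero)

end

definition dual_chain :: "nat \<Rightarrow> nat \<Rightarrow> (chain \<Rightarrow> chain) \<Rightarrow> chain" where
  "dual_chain N i \<phi> U =
     (if U \<subseteq> {..<N} \<and> card U = i
      then (-1) ^ crossings U ({..<N} - U) * \<phi> (basis ({..<N} - U)) {..<N} else 0)"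

lemma dual_chain_in_hom: "dual_chain N i \<phi> \<in> hom N i"
  by (auto simp: dual_chain_def hom_def nchains_def)

lemma join_dual_chain:
  assumes i: "i \<le> N"
    and into_top: "\<forall>b\<in>hom N (N - i). \<phi> b \<in> hom N N"
    and additive: "\<forall>b\<in>hom N (N - i). \<forall>b'\<in>hom N (N - i). \<phi> (b + b') = \<phi> b + \<phi> b'"
    and b: "b \<in> hom N (N - i)"
  shows "\<phi> b = join N (dual_chain N i \<phi>) b"
proof -
  let ?W = "{..<N}" and ?B = "{T \<in> Pow {..<N}. card T = N - i}"
  have hom_basis: "basis T \<in> hom N (N - i)" if "T \<in> ?B" for T
    using that basis_in_hom[of T N] by auto
  have add: "\<And>x y. x \<in> hom N (N - i) \<Longrightarrow> y \<in> hom N (N - i) \<Longrightarrow> \<phi> (x + y) = \<phi> x + \<phi> y"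
    using additive by blast
  have "\<phi> b = \<phi> (\<Sum>T\<in>?B. smul (b T) (basis T))" using hom_expansion[OF b] by (rule arg_cong)
  also have "\<dots> = (\<Sum>T\<in>?B. \<phi> (smul (b T) (basis T)))"
    using hom_basis by (intro additive_sum[OF hom_zero hom_add hom_smul add] hom_smul) blast
  also have "\<dots> = (\<Sum>T\<in>?B. smul (b T) (\<phi> (basis T)))"
    using hom_basis by (intro sum.cong refl additive_smul[OF hom_zero hom_add hom_smul add]) blast
  also have "\<dots> = (\<Sum>T\<in>?B. smul (b T) (join N (dual_chain N i \<phi>) (basis T)))"
  proof (intro sum.cong refl arg_cong[where f = "smul _"])
    fix T assume "T \<in> ?B"
    then have T: "T \<subseteq> ?W" "card T = N - i" by auto
    have "\<phi> (basis T) \<in> hom N N" using into_top hom_basis \<open>T \<in> ?B\<close> by blast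
    then obtain m where m: "\<phi> (basis T) = smul m (basis ?W)" by (auto simp: hom_top_degree)
    have "card (?W - T) = i" "?W - (?W - T) = T" using T i by (auto simp: card_complement)
    with m show "\<phi> (basis T) = join N (dual_chain N i \<phi>) (basis T)"
      by (simp add: join_complement[OF dual_chain_in_hom T i] dual_chain_def smul_apply basis_apply
          smul_smul mult_ac flip: power_add)
  qed
  also have "\<dots> = join N (dual_chain N i \<phi>) b"
    using hom_expansion[OF b] chain_linear_sum_smul[OF chain_linear_join_right] by metis
  finally show ?thesis .
qed

lemma hom_eq_by_join_complement:
  assumes a: "a \<in> hom N i" and a': "a' \<in> hom N i" and i: "i \<le> N"
    and eq: "\<And>T. T \<subseteq> {..<N} \<Longrightarrow> card T = N - i \<Longrightarrow> join N a (basis T) = join N a' (basis T)"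
  shows "a = a'"
proof (rule ext)
  let ?W = "{..<N}"
  fix S show "a S = a' S"
  proof (cases "S \<subseteq> ?W \<and> card S = i")
    case True
    let ?T = "?W - S"
    have T: "?T \<subseteq> ?W" "card ?T = N - i" and WT: "?W - ?T = S"
      using True by (auto simp: card_complement)
    have "smul (a S * (-1) ^ crossings S ?T) (basis ?W) = smul (a' S * (-1) ^ crossings S ?T) (basis ?W)"
      using eq[OF T] join_complement[OF a T i] join_complement[OF a' T i] WT by simp
    then have "a S * (-1) ^ crossings S ?T = a' S * (-1) ^ crossings S ?T"
      by (metis basis_apply mult.right_neutral smul_apply)
    then show ?thesis by simp
  next
    case False
    with a a' have "a S = 0" "a' S = 0" unfolding hom_def nchains_def by blast+
    then show ?thesis by simp
  qed
qed

lemma join_perfect_pairing: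
  assumes i: "i \<le> N"
    and into_top: "\<forall>b\<in>hom N (N - i). \<phi> b \<in> hom N N"
    and additive: "\<forall>b\<in>hom N (N - i). \<forall>b'\<in>hom N (N - i). \<phi> (b + b') = \<phi> b + \<phi> b'"
  shows "\<exists>!a. a \<in> hom N i \<and> (\<forall>b\<in>hom N (N - i). \<phi> b = join N a b)"
proof (rule ex1I)
  show "dual_chain N i \<phi> \<in> hom N i \<and> (\<forall>b\<in>hom N (N - i). \<phi> b = join N (dual_chain N i \<phi>) b)"
    using dual_chain_in_hom join_dual_chain[OF assms] by blast
  fix a assume a: "a \<in> hom N i \<and> (\<forall>b\<in>hom N (N - i). \<phi> b = join N a b)"
  show "a = dual_chain N i \<phi>"
  proof (rule hom_eq_by_join_complement[OF _ dual_chain_in_hom i])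
    fix T assume "T \<subseteq> {..<N}" "card T = N - i"
    then have "basis T \<in> hom N (N - i)" using basis_in_hom[of T N] by simp
    then show "join N a (basis T) = join N (dual_chain N i \<phi>) (basis T)"
      using a join_dual_chain[OF assms] by metis
  qed (use a in blast)
qed

lemma poincare_duality_algebra_join:
  "poincare_duality_algebra (nchains N) (hom N) (join N) (basis {}) N"
  unfolding poincare_duality_algebra_def
proof (intro conjI ballI allI impI)
  show "hom N k \<subseteq> nchains N" "0 \<in> hom N k" for k
    using hom_nchains hom_zero by blast+
  show "x + y \<in> hom N k" "- x \<in> hom N k" if "x \<in> hom N k" "y \<in> hom N k" for k x y
    using that by (auto intro: hom_add hom_uminus)
  show "\<exists>!xs. (\<forall>k. xs k \<in> hom N k) \<and> (\<forall>k>N. xs k = 0) \<and> x = (\<Sum>k\<le>N. xs k)"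
    if "x \<in> nchains N" for x
    using that by (rule nchains_graded_decomposition)
  show "join N x y \<in> nchains N" for x y by (rule join_in_nchains)
  show "join N (join N x y) z = join N x (join N y z)"
    if "x \<in> nchains N" "y \<in> nchains N" "z \<in> nchains N" for x y z
    using that by (rule join_assoc)
  show "join N (x + y) z = join N x z + join N y z" "join N x (y + z) = join N x y + join N x z"
    for x y z
    by (rule chain_linear_add[OF chain_linear_join_left] chain_linear_add[OF chain_linear_join_right])+
  show "basis {} \<in> nchains N" using hom_nchains[OF basis_in_hom[of "{}" N]] by simp
  show "join N (basis {}) x = x" "join N x (basis {}) = x" if "x \<in> nchains N" for x
    using that by (rule join_unit_left join_unit_right)+
  show "join N x y \<in> hom N (i + j)" "join N x y = smul ((-1) ^ (i * j)) (join N y x)"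
    if "x \<in> hom N i" "y \<in> hom N j" for i j x y
    using that by (rule join_in_hom join_commute)+
  show "basis {} \<noteq> 0" by (rule basis_nonzero)
  show "hom N 0 = range (\<lambda>k. smul k (basis {}))" by (rule hom_degree_zero)
  show "\<exists>G. finite G \<and> hom N k = span_Z G" for k
    by (intro exI[of _ "basis ` {S \<in> Pow {..<N}. card S = k}"] conjI hom_eq_span) simp
  show "hom N k = {0}" if "N < k" for k using that by (rule hom_above)
  show "\<exists>g. g \<noteq> 0 \<and> hom N N = range (\<lambda>k. smul k g)"
    using hom_top_degree basis_nonzero by blast
  show "\<exists>!a. a \<in> hom N i \<and> (\<forall>b\<in>hom N (N - i). \<phi> b = join N a b)"
    if "i \<le> N" "(\<forall>b\<in>hom N (N - i). \<phi> b \<in> hom N N) \<and>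
      (\<forall>b\<in>hom N (N - i). \<forall>b'\<in>hom N (N - i). \<phi> (b + b') = \<phi> b + \<phi> b')" for i \<phi>
    using that join_perfect_pairing by blast
qed

theorem theorem4p4:
  fixes N :: nat  \<comment> \<open>N = n + 1 vertices, n \<ge> -1\<close>
  shows "(\<forall>p a b. a \<in> hom N p \<longrightarrow> b \<in> nchains N \<longrightarrow>
            bdry N (join N a b) = join N (bdry N a) b + smul ((-1) ^ p) (join N a (bdry N b)))
       \<and> (\<forall>M f a b. simplex_map M N f \<longrightarrow> a \<in> nchains M \<longrightarrow> b \<in> nchains M \<longrightarrow>
            Nmap M f (join M a b) = join N (Nmap M f a) (Nmap M f b))
       \<and> poincare_duality_algebra (nchains N) (hom N) (join N) (basis {}) N"
  using bdry_join Nmap_join poincare_duality_algebra_join by blast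

end
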